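(* Let $b\ge2$ be an integer. (1) For any nonempty subset $S$ of $\mathbb{Z}$, the $b$-exponent sequence $(\alpha_k(S,b))_{k=0}^\infty$ is weakly increasing: $\alpha_{k+1}(S,b)\ge\alpha_k(S,b)$ for all $k\ge0$. (2) For any nonempty subset $S$ of $\mathbb{Z}$ and any nonnegative integers $k,\ell$, $\alpha_{k+\ell}(S,b)\ge\alpha_k(S,b)+\alpha_\ell(S,b)$. (3) If $S_1\subseteq S_2\subseteq\mathbb{Z}$ with $S_1$ nonempty, then $\alpha_k(S_1,b)\ge\alpha_k(S_2,b)$ for every $k\ge0$.
   Context: For $b\ge2$ and $a\in\mathbb{Z}$, $\operatorname{ord}_b(a)$ is the largest $k\in\mathbb{N}$ with $b^k\mid a$ ($+\infty$ for $a=0$). For nonempty $S\subseteq\mathbb{Z}$, a $b$-ordering of $S$ is a sequence $(a_i)_{i\ge0}$ in $S$ such that for each $i\ge1$, $a_i$ attains $\min_{a'\in S}\sum_{j=0}^{i-1}\operatorname{ord}_b(a'-a_j)$; the $b$-exponent sequence of $S$ is $\alpha_k(S,b):=\sum_{j=0}^{k-1}\operatorname{ord}_b(a_k-a_j)$ for any $b$-ordering (independent of the choice). *)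

theory Defs
  imports Main "HOL-Library.Extended_Nat"
begin

definition ordb :: "int \<Rightarrow> int \<Rightarrow> enat" where
  "ordb b a = (if a = 0 then \<infinity> else enat (GREATEST k. b ^ k dvd a))"

definition b_ordering :: "int set \<Rightarrow> int \<Rightarrow> (nat \<Rightarrow> int) \<Rightarrow> bool" where
  "b_ordering S b a \<longleftrightarrow>
     (\<forall>i. a i \<in> S) \<and>
     (\<forall>i\<ge>1. \<forall>a'\<in>S. (\<Sum>j<i. ordb b (a i - a j)) \<le> (\<Sum>j<i. ordb b (a' - a j)))"

definition alpha :: "int set \<Rightarrow> int \<Rightarrow> nat \<Rightarrow> enat" where
  "alpha S b k = (SOME v. \<exists>a. b_ordering S b a \<and> v = (\<Sum>j<k. ordb b (a k - a j)))"

end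

(*
  The exponent sequence has a max-min description: alpha_k(S, b) is the largest value,
  over lists ts of k integers, of the minimum over x in S of the sum of ord_b(x - t) for
  t in ts, and the first k terms of any b-ordering attain it.  Monotonicity in k,
  superadditivity (take for ts the first k followed by the first l terms of a b-ordering)
  and antimonotonicity in S follow at once.

  If S lies in one residue class mod b,
  replacing every element z by z div b lowers each valuation by exactly one.  Otherwise
  valuations between different classes vanish, and some residue class contains fewer
  elements of ts than of the b-ordering; inside that class the b-ordering restricts to a
  shorter b-ordering, whose value is no larger since the values of a b-ordering increase.
*)

theory Submission
  imports Defs "HOL-Computational_Algebra.Primes" "HOL-Library.Sublist"
begin

lemma ex_fibre_length_less:
  assumes "length xs < length ys"
  shows "\<exists>r. length [x\<leftarrow>xs. f x = r] < length [y\<leftarrow>ys. f y = r]"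
proof (rule ccontr)
  assume "\<not> ?thesis"
  then have "mset (map f ys) \<subseteq># mset (map f xs)"
    by (intro mset_subset_eqI)
      (simp add: count_mset count_list_eq_length_filter filter_map comp_def eq_commute not_less
        del: mset_map)
  then show False
    using size_mset_mono assms by fastforce
qed

lemma split_list_filter_length:
  assumes "m < length [z\<leftarrow>zs. P z]"
  obtains us u ws where "zs = us @ u # ws" "P u" "length [z\<leftarrow>us. P z] = m"
  using assms
proof (induction zs arbitrary: m thesis)
  case (Cons z zs)
  show ?case
  proof (cases "P z \<and> m = 0")
    case True
    then show ?thesis
      using Cons.prems(1)[of "[]"] by simp
  next
    case False
    then obtain m' where m': "m' < length [z\<leftarrow>zs. P z]"
      "m = (if P z then Suc m' else m')"
      using Cons.prems(2) by (cases m) (auto split: if_splits)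
    obtain us u ws where "zs = us @ u # ws" "P u" "length [z\<leftarrow>us. P z] = m'"
      using Cons.IH[OF _ m'(1)] by blast
    then show ?thesis
      using Cons.prems(1)[of "z # us" u ws] m'(2) by simp
  qed
qed simp

lemma ex_minimiser:
  fixes f :: "'a \<Rightarrow> 'b::wellorder"
  assumes "S \<noteq> {}"
  shows "\<exists>x\<in>S. \<forall>y\<in>S. f x \<le> f y"
proof -
  define m where "m = (LEAST v. \<exists>x\<in>S. f x = v)"
  have "\<exists>x\<in>S. f x = m"
    unfolding m_def by (rule LeastI_ex) (use assms in blast)
  then obtain x where x: "x \<in> S" "f x = m" ..
  have "m \<le> f y" if "y \<in> S" for y
    unfolding m_def by (rule Least_le) (use that in blast)
  then show ?thesis
    using x by (intro bexI[of _ x]) auto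
qed

lemma ordb_eq_multiplicity:
  assumes "z \<noteq> 0" "\<not> is_unit b"
  shows "ordb b z = enat (multiplicity b z)"
  using assms unfolding ordb_def
  by (auto intro!: Greatest_equality multiplicity_dvd simp: power_dvd_iff_le_multiplicity)

lemma ordb_eq_0:
  assumes "\<not> b dvd z"
  shows "ordb b z = 0"
proof -
  have "z \<noteq> 0" "\<not> is_unit b"
    using assms by (auto simp: unit_imp_dvd)
  then show ?thesis
    using assms by (simp add: ordb_eq_multiplicity not_dvd_imp_multiplicity_0 zero_enat_def)
qed

lemma ordb_mult_self:
  assumes "b \<noteq> 0" "\<not> is_unit b"
  shows "ordb b (b * z) = eSuc (ordb b z)"
proof (cases "z = 0")
  case False
  then show ?thesis
    using assms by (simp add: ordb_eq_multiplicity multiplicity_times_same eSuc_enat)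
qed (simp add: ordb_def)

definition ordsum :: "int \<Rightarrow> int list \<Rightarrow> int \<Rightarrow> enat" where
  "ordsum b ys x = (\<Sum>y\<leftarrow>ys. ordb b (x - y))"

lemma ordsum_Nil [simp]: "ordsum b [] x = 0"
  by (simp add: ordsum_def)

lemma ordsum_append: "ordsum b (xs @ ys) x = ordsum b xs x + ordsum b ys x"
  by (simp add: ordsum_def)

lemma ordsum_map_upt: "ordsum b (map a [0..<k]) x = (\<Sum>j<k. ordb b (x - a j))"
  by (induction k) (simp_all add: ordsum_def add.commute)

lemma ordsum_filter_residue: "ordsum b [y\<leftarrow>ys. y mod b = x mod b] x = ordsum b ys x"
  unfolding ordsum_def
  by (induction ys) (auto simp: ordb_eq_0 mod_eq_dvd_iff dvd_diff_commute)

inductive b_ordered :: "int set \<Rightarrow> int \<Rightarrow> int list \<Rightarrow> bool" for S b where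
  Nil: "b_ordered S b []"
| snoc: "b_ordered S b xs \<Longrightarrow> x \<in> S \<Longrightarrow> (\<forall>y\<in>S. ordsum b xs x \<le> ordsum b xs y)
         \<Longrightarrow> b_ordered S b (xs @ [x])"

lemma b_ordered_snoc_iff:
  "b_ordered S b (xs @ [x]) \<longleftrightarrow>
     b_ordered S b xs \<and> x \<in> S \<and> (\<forall>y\<in>S. ordsum b xs x \<le> ordsum b xs y)"
  by (auto elim: b_ordered.cases intro: b_ordered.snoc)

lemma b_ordered_appendD: "b_ordered S b (xs @ ys) \<Longrightarrow> b_ordered S b xs"
  by (induction ys rule: rev_induct) (auto simp: b_ordered_snoc_iff simp flip: append_assoc)

lemma b_ordered_set_subset: "b_ordered S b xs \<Longrightarrow> set xs \<subseteq> S"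
  by (induction rule: b_ordered.induct) auto

lemma b_ordered_value_mono:
  assumes "b_ordered S b (xs @ [x])" "prefix (us @ [u]) (xs @ [x])"
  shows "ordsum b us u \<le> ordsum b xs x"
  using assms
proof (induction xs arbitrary: x rule: rev_induct)
  case (snoc x' xs)
  have ord: "b_ordered S b (xs @ [x'])" "x \<in> S"
    using snoc.prems(1) b_ordered_snoc_iff[of S b "xs @ [x']" x] by auto
  show ?case
  proof (cases "us @ [u] = xs @ [x', x]")
    case False
    then have "prefix (us @ [u]) (xs @ [x'])"
      using snoc.prems(2) by (auto simp: prefix_snoc simp flip: append_assoc)
    then have "ordsum b us u \<le> ordsum b xs x'"
      by (rule snoc.IH[OF ord(1)])
    also have "\<dots> \<le> ordsum b xs x"
      using ord by (simp add: b_ordered_snoc_iff)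
    also have "\<dots> \<le> ordsum b (xs @ [x']) x"
      by (simp add: ordsum_append)
    finally show ?thesis .
  qed simp
qed (auto simp: prefix_Cons)

lemma b_ordered_filter_residue:
  "b_ordered S b xs \<Longrightarrow> b_ordered {x\<in>S. x mod b = r} b [x\<leftarrow>xs. x mod b = r]"
proof (induction rule: b_ordered.induct)
  case (snoc xs x)
  then show ?case
    by (auto intro!: b_ordered.snoc simp flip: ordsum_filter_residue[where ys = xs])
qed (simp add: b_ordered.Nil)

lemma b_ordering_value_le:
  assumes "b_ordering S b a" "x \<in> S"
  shows "ordsum b (map a [0..<k]) (a k) \<le> ordsum b (map a [0..<k]) x"
  unfolding ordsum_map_upt using assms by (cases "k = 0") (auto simp: b_ordering_def)

lemma b_ordering_iff_b_ordered_prefixes: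
  "b_ordering S b a \<longleftrightarrow> (\<forall>n. b_ordered S b (map a [0..<n]))"
proof
  assume a: "b_ordering S b a"
  show "\<forall>n. b_ordered S b (map a [0..<n])"
  proof
    fix n
    show "b_ordered S b (map a [0..<n])"
      using a b_ordering_value_le[OF a]
      by (induction n) (auto simp: b_ordering_def b_ordered_snoc_iff b_ordered.Nil)
  qed
next
  assume "\<forall>n. b_ordered S b (map a [0..<n])"
  then have "b_ordered S b (map a [0..<Suc n])" for n
    by blast
  then show "b_ordering S b a"
    by (auto simp: b_ordering_def b_ordered_snoc_iff ordsum_map_upt)
qed

lemma b_ordering_prefix_b_ordered:
  "b_ordering S b a \<Longrightarrow> b_ordered S b (map a [0..<k] @ [a k])"
  using b_ordering_iff_b_ordered_prefixes[of S b a, THEN iffD1, rule_format, of "Suc k"] by simp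

primrec greedy_prefix :: "int set \<Rightarrow> int \<Rightarrow> nat \<Rightarrow> int list" where
  "greedy_prefix S b 0 = []"
| "greedy_prefix S b (Suc n) =
     (let xs = greedy_prefix S b n in
      xs @ [SOME x. x \<in> S \<and> (\<forall>y\<in>S. ordsum b xs x \<le> ordsum b xs y)])"

lemma b_ordered_greedy_prefix:
  assumes "S \<noteq> {}"
  shows "b_ordered S b (greedy_prefix S b n)"
proof (induction n)
  case (Suc n)
  define xs where "xs = greedy_prefix S b n"
  let ?P = "\<lambda>x. x \<in> S \<and> (\<forall>y\<in>S. ordsum b xs x \<le> ordsum b xs y)"
  have "?P (SOME x. ?P x)"
    by (rule someI_ex) (use ex_minimiser[OF assms] in blast)
  then show ?case
    using Suc by (simp add: b_ordered_snoc_iff xs_def Let_def)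
qed (simp add: b_ordered.Nil)

lemma b_ordering_exists:
  assumes "S \<noteq> {}"
  obtains a where "b_ordering S b a"
proof -
  define a where "a n = last (greedy_prefix S b (Suc n))" for n
  have "map a [0..<n] = greedy_prefix S b n" for n
  proof (induction n)
    case (Suc n)
    then show ?case
      by (simp add: a_def Let_def)
  qed simp
  then have "b_ordering S b a"
    unfolding b_ordering_iff_b_ordered_prefixes using b_ordered_greedy_prefix[OF assms] by simp
  then show ?thesis ..
qed

context
  fixes b :: int
  assumes b: "b \<ge> 2"
begin

lemma ordsum_congruent_div:
  assumes "\<forall>y\<in>set ys. y mod b = x mod b"
  shows "ordsum b ys x = ordsum b (map (\<lambda>z. z div b) ys) (x div b) + enat (length ys)"
proof -
  have "x - y = b * (x div b - y div b)" if "y \<in> set ys" for y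
    using assms that by (simp add: right_diff_distrib flip: minus_mod_eq_mult_div)
  then have "ordsum b ys x = (\<Sum>y\<leftarrow>ys. ordb b (x div b - y div b) + 1)"
    unfolding ordsum_def using b
    by (intro arg_cong[where f = sum_list] map_cong) (simp_all add: ordb_mult_self eSuc_plus_1)
  also have "\<dots> = ordsum b (map (\<lambda>z. z div b) ys) (x div b) + enat (length ys)"
    by (simp add: ordsum_def sum_list_addf sum_list_triv of_nat_eq_enat comp_def)
  finally show ?thesis .
qed

lemma b_ordered_div:
  assumes "b_ordered S b xs" "\<forall>x\<in>S. x mod b = r"
  shows "b_ordered ((\<lambda>z. z div b) ` S) b (map (\<lambda>z. z div b) xs)"
  using assms(1)
proof (induction rule: b_ordered.induct)
  case (snoc xs x)
  have "ordsum b (map (\<lambda>z. z div b) xs) (x div b)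
      \<le> ordsum b (map (\<lambda>z. z div b) xs) (y div b)" if "y \<in> S" for y
  proof -
    have "\<forall>z\<in>set xs. z mod b = x mod b" "\<forall>z\<in>set xs. z mod b = y mod b"
      using b_ordered_set_subset[OF snoc.hyps(1)] snoc.hyps(2) that assms(2) by auto
    moreover have "ordsum b xs x \<le> ordsum b xs y"
      using snoc.hyps(3) that by blast
    ultimately show ?thesis
      by (simp only: ordsum_congruent_div) simp
  qed
  then show ?case
    using snoc by (auto intro!: b_ordered.snoc)
qed (simp add: b_ordered.Nil)

lemma b_ordered_not_all_congruent:
  assumes "b_ordered S b (cs @ [c])" "cs \<noteq> []" "z \<in> S" "z mod b \<noteq> c mod b"
  shows "\<exists>y\<in>set cs. y mod b \<noteq> c mod b"
proof (rule ccontr)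
  assume "\<not> ?thesis"
  then have congruent: "\<forall>y\<in>set cs. y mod b = c mod b"
    by blast
  then have "ordsum b cs c = ordsum b (map (\<lambda>z. z div b) cs) (c div b) + enat (length cs)"
    by (intro ordsum_congruent_div) auto
  then have "0 < ordsum b cs c"
    using assms(2) by (simp add: zero_less_iff_neq_zero enat_0_iff)
  moreover have "ordsum b cs z = 0"
    using congruent assms(4) ordsum_filter_residue[of b z cs] by (simp add: filter_empty_conv)
  ultimately show False
    using assms(1,3) by (auto simp: b_ordered_snoc_iff)
qed

lemma b_ordered_residue_reduction:
  assumes "b_ordered S b (cs @ [c])" "cs \<noteq> []" "z \<in> S" "z mod b \<noteq> c mod b"
    and "length ts \<le> length cs"
  obtains r us u where "b_ordered {x\<in>S. x mod b = r} b (us @ [u])"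
    "ordsum b us u \<le> ordsum b cs c" "length [t\<leftarrow>ts. t mod b = r] \<le> length us"
    "length us < length cs"
proof -
  have "length ts < length (cs @ [c])"
    using assms(5) by simp
  then obtain r where r: "length [t\<leftarrow>ts. t mod b = r] < length [y\<leftarrow>cs @ [c]. y mod b = r]"
    by (blast dest: ex_fibre_length_less[where f = "\<lambda>y. y mod b"])
  then obtain us u ws where split: "cs @ [c] = us @ u # ws" "u mod b = r"
    "length [y\<leftarrow>us. y mod b = r] = length [t\<leftarrow>ts. t mod b = r]"
    by (rule split_list_filter_length)
  define us' where "us' = [y\<leftarrow>us. y mod b = r]"
  have "b_ordered S b (us @ [u])"
    using assms(1) split(1) b_ordered_appendD[of S b "us @ [u]" ws] by simp
  then have "b_ordered {x\<in>S. x mod b = r} b (us' @ [u])"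
    using b_ordered_filter_residue[of S b "us @ [u]" r] split(2) by (simp add: us'_def)
  moreover have "ordsum b us' u \<le> ordsum b cs c"
    using ordsum_filter_residue[of b u us] b_ordered_value_mono[OF assms(1), of us u] split(1,2)
    by (simp add: us'_def prefix_def)
  moreover obtain y where "y \<in> set cs" "y mod b \<noteq> c mod b"
    using b_ordered_not_all_congruent[OF assms(1-4)] by blast
  then have "length [y\<leftarrow>cs @ [c]. y mod b = r] < length (cs @ [c])"
    by (cases "c mod b = r") (auto intro!: length_filter_less le_imp_less_Suc length_filter_le)
  then have "length us' < length cs"
    using r split(3) by (simp add: us'_def)
  ultimately show ?thesis
    using that split(3) by (simp add: us'_def)
qed

lemma b_ordered_value_maximal_enat:
  assumes "b_ordered S b (cs @ [c])" "ordsum b cs c = enat v" "length ts \<le> length cs"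
  shows "\<exists>x\<in>S. ordsum b ts x \<le> enat v"
  using assms
proof (induction "v + length cs" arbitrary: S cs c ts v rule: less_induct)
  \<comment> \<open>v decreases in the rescaling case, length cs in the restriction case\<close>
  case less
  have c: "c \<in> S" and cs: "b_ordered S b cs"
    using less.prems(1) by (auto simp: b_ordered_snoc_iff)
  consider "cs = []" | "\<forall>x\<in>S. x mod b = c mod b" "cs \<noteq> []"
    | z where "z \<in> S" "z mod b \<noteq> c mod b" "cs \<noteq> []"
    by blast
  then show ?case
  proof cases
    case 1
    then show ?thesis
      using less.prems(3) c by auto
  next
    case 2
    define h where "h = (\<lambda>z::int. z div b)"
    define ts' where "ts' = [t\<leftarrow>ts. t mod b = c mod b]"
    have "ordsum b cs c = ordsum b (map h cs) (h c) + enat (length cs)"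
      unfolding h_def using b_ordered_set_subset[OF cs] 2(1) by (intro ordsum_congruent_div) auto
    then obtain v' where v': "ordsum b (map h cs) (h c) = enat v'" "v = v' + length cs"
      using less.prems(2) by (cases "ordsum b (map h cs) (h c)") auto
    have ts': "length ts' \<le> length cs"
      using le_trans[OF length_filter_le less.prems(3)] by (simp add: ts'_def)
    have "v' + length (map h cs) < v + length cs"
      using v'(2) 2(2) by simp
    moreover have "b_ordered (h ` S) b (map h cs @ [h c])"
      using b_ordered_div[OF less.prems(1) 2(1)] by (simp add: h_def)
    moreover have "length (map h ts') \<le> length (map h cs)"
      using ts' by simp
    ultimately have "\<exists>x'\<in>h ` S. ordsum b (map h ts') x' \<le> enat v'"
      using v'(1) by (intro less.hyps)
    then obtain x where x: "x \<in> S" "ordsum b (map h ts') (h x) \<le> enat v'"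
      by blast
    have "ordsum b ts x = ordsum b ts' x"
      using x(1) 2(1) ordsum_filter_residue[of b x ts] by (simp add: ts'_def)
    also have "\<dots> = ordsum b (map h ts') (h x) + enat (length ts')"
      unfolding h_def using x(1) 2(1) by (intro ordsum_congruent_div) (auto simp: ts'_def)
    also have "\<dots> \<le> enat v"
      using x(2) ts' v'(2) add_mono[of _ "enat v'" "enat (length ts')" "enat (length cs)"] by simp
    finally show ?thesis
      using x(1) by blast
  next
    case 3
    obtain r us u where us: "b_ordered {x\<in>S. x mod b = r} b (us @ [u])"
      "ordsum b us u \<le> ordsum b cs c" "length [t\<leftarrow>ts. t mod b = r] \<le> length us"
      "length us < length cs"
      by (rule b_ordered_residue_reduction[OF less.prems(1) 3(3,1,2) less.prems(3)])
    then obtain v' where v': "ordsum b us u = enat v'" "v' \<le> v"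
      using less.prems(2) by (cases "ordsum b us u") auto
    have "v' + length us < v + length cs"
      using v'(2) us(4) by simp
    then have "\<exists>x\<in>{x\<in>S. x mod b = r}. ordsum b [t\<leftarrow>ts. t mod b = r] x \<le> enat v'"
      using us(1) v'(1) us(3) by (rule less.hyps)
    then obtain x where x: "x \<in> S" "x mod b = r"
      "ordsum b [t\<leftarrow>ts. t mod b = r] x \<le> enat v'"
      by blast
    then have "ordsum b ts x \<le> enat v'"
      using ordsum_filter_residue[of b x ts] by simp
    also have "\<dots> \<le> enat v"
      using v'(2) by simp
    finally show ?thesis
      using x(1) by blast
  qed
qed

lemma b_ordered_value_maximal:
  assumes "b_ordered S b (cs @ [c])" "length ts \<le> length cs"
  shows "\<exists>x\<in>S. ordsum b ts x \<le> ordsum b cs c"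
proof (cases "ordsum b cs c")
  case (enat v)
  then show ?thesis
    using b_ordered_value_maximal_enat[OF assms(1) _ assms(2)] by simp
next
  case infinity
  then show ?thesis
    using assms(1) by (auto simp: b_ordered_snoc_iff)
qed

lemma b_ordering_value_mono:
  assumes "b_ordering S b a" "b_ordering S' b a'" "S' \<subseteq> S" "k \<le> l"
  shows "ordsum b (map a [0..<k]) (a k) \<le> ordsum b (map a' [0..<l]) (a' l)"
proof -
  from b_ordering_prefix_b_ordered[OF assms(2)]
  obtain x where x: "x \<in> S'" "ordsum b (map a [0..<k]) x \<le> ordsum b (map a' [0..<l]) (a' l)"
    using b_ordered_value_maximal[of S' "map a' [0..<l]" "a' l" "map a [0..<k]"] assms(4) by auto
  have "ordsum b (map a [0..<k]) (a k) \<le> ordsum b (map a [0..<k]) x"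
    using b_ordering_value_le[OF assms(1)] x(1) assms(3) by blast
  from this x(2) show ?thesis
    by (rule order_trans)
qed

lemma alpha_b_ordering:
  assumes "b_ordering S b a"
  shows "alpha S b k = ordsum b (map a [0..<k]) (a k)"
proof -
  have "\<exists>c. b_ordering S b c \<and> alpha S b k = (\<Sum>j<k. ordb b (c k - c j))"
    unfolding alpha_def by (rule someI_ex) (use assms in blast)
  then obtain c where c: "b_ordering S b c" "alpha S b k = ordsum b (map c [0..<k]) (c k)"
    unfolding ordsum_map_upt by blast
  show ?thesis
    unfolding c(2) using b_ordering_value_mono[OF _ _ order_refl order_refl] assms c(1)
    by (intro antisym)
qed

lemma alpha_mono:
  assumes "S \<noteq> {}" "k \<le> l"
  shows "alpha S b k \<le> alpha S b l"
proof -
  obtain a where a: "b_ordering S b a"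
    using b_ordering_exists[OF assms(1)] .
  show ?thesis
    unfolding alpha_b_ordering[OF a] using b_ordering_value_mono[OF a a order_refl assms(2)] .
qed

lemma alpha_superadditive:
  assumes "S \<noteq> {}"
  shows "alpha S b k + alpha S b l \<le> alpha S b (k + l)"
proof -
  obtain a where a: "b_ordering S b a"
    using b_ordering_exists[OF assms] .
  obtain x where x: "x \<in> S"
    "ordsum b (map a [0..<k] @ map a [0..<l]) x \<le> ordsum b (map a [0..<k + l]) (a (k + l))"
    using b_ordered_value_maximal[OF b_ordering_prefix_b_ordered[OF a],
        of "map a [0..<k] @ map a [0..<l]"] by auto
  have "alpha S b k + alpha S b l \<le> ordsum b (map a [0..<k]) x + ordsum b (map a [0..<l]) x"
    unfolding alpha_b_ordering[OF a] using b_ordering_value_le[OF a x(1)] by (intro add_mono)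
  also have "\<dots> \<le> alpha S b (k + l)"
    unfolding alpha_b_ordering[OF a] using x(2) by (simp add: ordsum_append)
  finally show ?thesis .
qed

lemma alpha_antimono:
  assumes "S1 \<noteq> {}" "S1 \<subseteq> S2"
  shows "alpha S2 b k \<le> alpha S1 b k"
proof -
  obtain a1 where a1: "b_ordering S1 b a1"
    using b_ordering_exists[OF assms(1)] .
  obtain a2 where a2: "b_ordering S2 b a2"
    using b_ordering_exists assms by blast
  show ?thesis
    unfolding alpha_b_ordering[OF a1] alpha_b_ordering[OF a2]
    using b_ordering_value_mono[OF a2 a1 assms(2) order_refl] .
qed

end

theorem proposition5p4:
  fixes b :: int
  assumes "b \<ge> 2"
  shows "(\<forall>S. S \<noteq> {} \<longrightarrow> (\<forall>k. alpha S b (Suc k) \<ge> alpha S b k))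
       \<and> (\<forall>S. S \<noteq> {} \<longrightarrow> (\<forall>k l. alpha S b (k + l) \<ge> alpha S b k + alpha S b l))
       \<and> (\<forall>S1 S2. S1 \<noteq> {} \<and> S1 \<subseteq> S2 \<longrightarrow> (\<forall>k. alpha S1 b k \<ge> alpha S2 b k))"
  using alpha_mono[OF assms] alpha_superadditive[OF assms] alpha_antimono[OF assms]
  by (simp add: le_SucI)

end
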